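(* Assume $M$ is a message set whose communication topology $G_M$ is an oriented ring, and let $S=(P_1,\dots,P_N)$ be a $1$-synchronizable $M$-system. Then for every $\tau\in T_\omega(S)$ there is a normalized trace $\tau_N\in T_\omega(S)$ such that $\tau\equiv_S\tau_N$.
   Context: A message set $M=(\Sigma_M,N,\mathrm{src},\mathrm{dst})$: finite set of messages, $N\ge1$ peers, $\mathrm{src}(a)\neq\mathrm{dst}(a)\in\{1,\dots,N\}$. Its communication topology $G_M$ is the directed graph on $\{1,\dots,N\}$ with an edge $i\to j$ iff some message $a$ has $\mathrm{src}(a)=i$, $\mathrm{dst}(a)=j$; $G_M$ is an oriented ring if its edge set is exactly $\{(i,j)\mid j=i+1 \bmod N\}$. Actions $!a$ (by peer $\mathrm{src}(a)$), $?a$ (by peer $\mathrm{dst}(a)$); traces are finite action sequences; $!?a$ abbreviates $!a\cdot?a$. For a trace $\tau$, $\pi_!(\tau)$ is the sequence of sent messages; $\mathrm{buf}_{i\to j}(\tau)$ is the word $w$ (if any) with (sent on $i\to j$) $=$ (received on $i\to j$)$\cdot w$. $\tau$ is FIFO ($k$-bounded FIFO) if for all $i,j$ and prefixes $\tau'$, $\mathrm{buf}_{i\to j}(\tau')$ is defined (and has length $\le k$); synchronous if of the form $!?a_1\cdots!?a_k$. A trace is normalized if it is of the form $\tau_0\cdot !a_1\cdots !a_n$ with $\tau_0$ synchronous, $n\ge0$, $a_1,\dots,a_n\in\Sigma_M$. A system $S=(P_1,\dots,P_N)$: finite automata $P_i$ (all states accepting) over actions of peer $i$, with one FIFO channel per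 ordered pair $i\neq j$. A configuration: one control state per peer and contents $w_{i,j}$ of channels; stable if all channels empty. $!a$ ($\mathrm{src}(a)=i,\mathrm{dst}(a)=j$) moves $P_i$ and appends $a$ to $w_{i,j}$; $?a$ moves $P_j$ and removes $a$ from the head of $w_{i,j}$; $c_0$ is the initial configuration. $T_k(S)$ ($k\ge1$): $k$-bounded FIFO traces $\tau$ with $c_0\xrightarrow{\tau}c$ for some $c$; $T_0(S)$: synchronous such traces; $T_\omega(S)=\bigcup_kT_k(S)$. $\tau_1\equiv_S\tau_2$ iff $\tau_1,\tau_2\in T_\omega(S)$ and there is $c$ with $c_0\xrightarrow{\tau_1}c$ and $c_0\xrightarrow{\tau_2}c$. $ST_k(S)=\{\pi_!(\tau)\mid\tau\in T_k(S)\}\cup\{(\pi_!(\tau),c)\mid c_0\xrightarrow{\tau}c,\ c\text{ stable},\ \tau\in T_k(S)\}$; $S$ is $1$-synchronizable if $ST_0(S)=ST_1(S)$. *)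

theory Defs
  imports Main
begin

record 'm msgset =
  msgs :: "'m set"
  npeers :: nat
  src :: "'m \<Rightarrow> nat"
  dst :: "'m \<Rightarrow> nat"

definition is_msgset :: "'m msgset \<Rightarrow> bool" where
  "is_msgset M \<longleftrightarrow> finite (msgs M) \<and> npeers M \<ge> 1 \<and>
     (\<forall>a \<in> msgs M. src M a \<noteq> dst M a \<and> src M a \<in> {1..npeers M} \<and> dst M a \<in> {1..npeers M})"

definition topology :: "'m msgset \<Rightarrow> (nat \<times> nat) set" where
  "topology M = {(src M a, dst M a) | a. a \<in> msgs M}"

text \<open>Peers are 1..N; the successor of i on the ring is i+1 (mod N), i.e. N goes to 1.\<close>
definition oriented_ring :: "'m msgset \<Rightarrow> bool" where
  "oriented_ring M \<longleftrightarrow> topology M = {(i, i mod npeers M + 1) | i. i \<in> {1..npeers M}}"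

datatype 'm action = Send 'm | Recv 'm

fun msg_of :: "'m action \<Rightarrow> 'm" where
  "msg_of (Send a) = a" | "msg_of (Recv a) = a"

fun peer_of :: "'m msgset \<Rightarrow> 'm action \<Rightarrow> nat" where
  "peer_of M (Send a) = src M a" | "peer_of M (Recv a) = dst M a"

fun pi_send :: "'m action list \<Rightarrow> 'm list" where
  "pi_send [] = []"
| "pi_send (Send a # t) = a # pi_send t"
| "pi_send (Recv a # t) = pi_send t"

fun pi_recv :: "'m action list \<Rightarrow> 'm list" where
  "pi_recv [] = []"
| "pi_recv (Send a # t) = pi_recv t"
| "pi_recv (Recv a # t) = a # pi_recv t"

definition sent_on :: "'m msgset \<Rightarrow> nat \<Rightarrow> nat \<Rightarrow> 'm action list \<Rightarrow> 'm list" where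
  "sent_on M i j t = filter (\<lambda>a. src M a = i \<and> dst M a = j) (pi_send t)"

definition recv_on :: "'m msgset \<Rightarrow> nat \<Rightarrow> nat \<Rightarrow> 'm action list \<Rightarrow> 'm list" where
  "recv_on M i j t = filter (\<lambda>a. src M a = i \<and> dst M a = j) (pi_recv t)"

definition buf :: "'m msgset \<Rightarrow> nat \<Rightarrow> nat \<Rightarrow> 'm action list \<Rightarrow> 'm list option" where
  "buf M i j t = (if \<exists>w. sent_on M i j t = recv_on M i j t @ w
                  then Some (drop (length (recv_on M i j t)) (sent_on M i j t)) else None)"

definition is_fifo :: "'m msgset \<Rightarrow> 'm action list \<Rightarrow> bool" where
  "is_fifo M t \<longleftrightarrow> (\<forall>i j n. n \<le> length t \<longrightarrow> buf M i j (take n t) \<noteq> None)"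

definition is_k_fifo :: "'m msgset \<Rightarrow> nat \<Rightarrow> 'm action list \<Rightarrow> bool" where
  "is_k_fifo M k t \<longleftrightarrow>
     (\<forall>i j n. n \<le> length t \<longrightarrow> (\<exists>w. buf M i j (take n t) = Some w \<and> length w \<le> k))"

definition is_sync :: "'m action list \<Rightarrow> bool" where
  "is_sync t \<longleftrightarrow> (\<exists>as. t = concat (map (\<lambda>a. [Send a, Recv a]) as))"

definition normalized :: "'m msgset \<Rightarrow> 'm action list \<Rightarrow> bool" where
  "normalized M t \<longleftrightarrow> (\<exists>t0 as. is_sync t0 \<and> set as \<subseteq> msgs M \<and> t = t0 @ map Send as)"

text \<open>Peer i is a finite automaton with state set states S i, initial state init S i and
  transition relation trans S i; all states are accepting.\<close>
record ('m, 's) system =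
  states :: "nat \<Rightarrow> 's set"
  init :: "nat \<Rightarrow> 's"
  trans :: "nat \<Rightarrow> ('s \<times> 'm action \<times> 's) set"

definition is_system :: "'m msgset \<Rightarrow> ('m, 's) system \<Rightarrow> bool" where
  "is_system M S \<longleftrightarrow>
     (\<forall>i \<in> {1..npeers M}. finite (states S i) \<and> init S i \<in> states S i \<and>
        finite (trans S i) \<and>
        (\<forall>q x q'. (q, x, q') \<in> trans S i \<longrightarrow>
            q \<in> states S i \<and> q' \<in> states S i \<and> msg_of x \<in> msgs M \<and> peer_of M x = i)) \<and>
     (\<forall>i. i \<notin> {1..npeers M} \<longrightarrow> trans S i = {})"

type_synonym ('m, 's) config = "(nat \<Rightarrow> 's) \<times> (nat \<Rightarrow> nat \<Rightarrow> 'm list)"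

definition conf0 :: "('m, 's) system \<Rightarrow> ('m, 's) config" where
  "conf0 S = (init S, \<lambda>i j. [])"

definition stable :: "('m, 's) config \<Rightarrow> bool" where
  "stable c \<longleftrightarrow> (\<forall>i j. snd c i j = [])"

definition step :: "'m msgset \<Rightarrow> ('m, 's) system \<Rightarrow> ('m, 's) config \<Rightarrow> 'm action
                    \<Rightarrow> ('m, 's) config \<Rightarrow> bool" where
  "step M S c x c' \<longleftrightarrow> (case x of
      Send a \<Rightarrow> (let i = src M a; j = dst M a in
         (fst c i, x, fst c' i) \<in> trans S i \<and> fst c' = (fst c)(i := fst c' i) \<and>
         snd c' = (snd c)(i := (snd c i)(j := snd c i j @ [a])))
    | Recv a \<Rightarrow> (let i = src M a; j = dst M a in
         (fst c j, x, fst c' j) \<in> trans S j \<and> fst c' = (fst c)(j := fst c' j) \<and>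
         snd c i j = a # snd c' i j \<and>
         snd c' = (snd c)(i := (snd c i)(j := snd c' i j))))"

fun run :: "'m msgset \<Rightarrow> ('m, 's) system \<Rightarrow> ('m, 's) config \<Rightarrow> 'm action list
             \<Rightarrow> ('m, 's) config \<Rightarrow> bool" where
  "run M S c [] c' \<longleftrightarrow> c' = c"
| "run M S c (x # t) c' \<longleftrightarrow> (\<exists>c''. step M S c x c'' \<and> run M S c'' t c')"

definition reachable_trace :: "'m msgset \<Rightarrow> ('m, 's) system \<Rightarrow> 'm action list \<Rightarrow> bool" where
  "reachable_trace M S t \<longleftrightarrow> (\<exists>c. run M S (conf0 S) t c)"

definition T :: "'m msgset \<Rightarrow> ('m, 's) system \<Rightarrow> nat \<Rightarrow> 'm action list set" where
  "T M S k = {t. reachable_trace M S t \<and> (if k = 0 then is_sync t else is_k_fifo M k t)}"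

definition T_omega :: "'m msgset \<Rightarrow> ('m, 's) system \<Rightarrow> 'm action list set" where
  "T_omega M S = (\<Union>k \<in> {1..}. T M S k)"

definition equiv_S :: "'m msgset \<Rightarrow> ('m, 's) system \<Rightarrow> 'm action list \<Rightarrow> 'm action list \<Rightarrow> bool" where
  "equiv_S M S t1 t2 \<longleftrightarrow> t1 \<in> T_omega M S \<and> t2 \<in> T_omega M S \<and>
     (\<exists>c. run M S (conf0 S) t1 c \<and> run M S (conf0 S) t2 c)"

definition ST :: "'m msgset \<Rightarrow> ('m, 's) system \<Rightarrow> nat
                  \<Rightarrow> ('m list + ('m list \<times> ('m, 's) config)) set" where
  "ST M S k = {Inl (pi_send t) | t. t \<in> T M S k} \<union>
              {Inr (pi_send t, c) | t c. run M S (conf0 S) t c \<and> stable c \<and> t \<in> T M S k}"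

definition synchronizable1 :: "'m msgset \<Rightarrow> ('m, 's) system \<Rightarrow> bool" where
  "synchronizable1 M S \<longleftrightarrow> ST M S 0 = ST M S 1"

end

theory Submission
  imports Defs
begin

text \<open>A run is the same as one local path per peer together with a consistent evolution
  of the channels, so any reordering of a trace that keeps the local order of every peer and
  the channel contents reaches the same configuration. By induction on the trace, every
  reachable configuration is reached by a synchronous prefix followed by pending sends. A new
  send joins the pending sends. A receive of b by peer j moves into the synchronous prefix: on
  a ring b is the first pending send of its sender i, so only j's local order changes, j
  having to receive b before its own pending sends v. That j may do so is where
  1-synchronizability enters: every trace in which i sends b after the synchronous prefix and
  then j sends a prefix of v is 1-bounded, so its synchronous counterpart is executable; and
  the trace completed by j receiving b is moreover stable, so its synchronous counterpart,
  in which j receives b before sending v, reaches the same configuration.\<close>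

definition peer_proj :: "'m msgset \<Rightarrow> nat \<Rightarrow> 'm action list \<Rightarrow> 'm action list" where
  "peer_proj M p t = filter (\<lambda>x. peer_of M x = p) t"

fun local_path :: "('m, 's) system \<Rightarrow> nat \<Rightarrow> 's \<Rightarrow> 'm action list \<Rightarrow> 's \<Rightarrow> bool" where
  "local_path S p q [] q' \<longleftrightarrow> q' = q"
| "local_path S p q (x # w) q' \<longleftrightarrow> (\<exists>q''. (q, x, q'') \<in> trans S p \<and> local_path S p q'' w q')"

type_synonym 'm channels = "nat \<Rightarrow> nat \<Rightarrow> 'm list"

definition chan_step :: "'m msgset \<Rightarrow> 'm channels \<Rightarrow> 'm action \<Rightarrow> 'm channels option" where
  "chan_step M ch x = (case x of
      Send a \<Rightarrow> Some (ch(src M a := (ch (src M a))(dst M a := ch (src M a) (dst M a) @ [a])))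
    | Recv a \<Rightarrow> (case ch (src M a) (dst M a) of
                   [] \<Rightarrow> None
                 | y # ys \<Rightarrow> if y = a then Some (ch(src M a := (ch (src M a))(dst M a := ys))) else None))"

fun chan_run :: "'m msgset \<Rightarrow> 'm channels \<Rightarrow> 'm action list \<Rightarrow> 'm channels option" where
  "chan_run M ch [] = Some ch"
| "chan_run M ch (x # t) = (case chan_step M ch x of None \<Rightarrow> None | Some ch' \<Rightarrow> chan_run M ch' t)"

lemma local_path_append:
  "local_path S p q (u @ w) q' \<longleftrightarrow> (\<exists>m. local_path S p q u m \<and> local_path S p m w q')"
  by (induction u arbitrary: q) auto

lemma local_path_prefix: "local_path S p q (u @ w) q' \<Longrightarrow> \<exists>m. local_path S p q u m"
  using local_path_append by metis

lemma chan_run_append: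
  "chan_run M ch (t1 @ t2) = (case chan_run M ch t1 of None \<Rightarrow> None | Some ch' \<Rightarrow> chan_run M ch' t2)"
  by (induction t1 arbitrary: ch) (auto split: option.splits)

lemma peer_proj_simps [simp]:
  "peer_proj M p [] = []"
  "peer_proj M p (x # t) = (if peer_of M x = p then x # peer_proj M p t else peer_proj M p t)"
  "peer_proj M p (u @ w) = peer_proj M p u @ peer_proj M p w"
  by (auto simp: peer_proj_def)

lemma peer_proj_map_Send: "peer_proj M p (map Send us) = map Send (filter (\<lambda>a. src M a = p) us)"
  by (induction us) auto

lemma step_iff_local:
  "step M S c x c' \<longleftrightarrow>
     (fst c (peer_of M x), x, fst c' (peer_of M x)) \<in> trans S (peer_of M x) \<and>
     fst c' = (fst c)(peer_of M x := fst c' (peer_of M x)) \<and> chan_step M (snd c) x = Some (snd c')"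
proof (cases x)
  case (Send a)
  then show ?thesis by (auto simp: step_def chan_step_def Let_def)
next
  case (Recv a)
  then show ?thesis
    by (auto simp: step_def chan_step_def Let_def split: list.splits if_splits) (metis fun_upd_same)+
qed

lemma run_iff_local:
  "run M S c t c' \<longleftrightarrow>
     (\<forall>p. local_path S p (fst c p) (peer_proj M p t) (fst c' p)) \<and> chan_run M (snd c) t = Some (snd c')"
proof (induction t arbitrary: c)
  case Nil
  then show ?case by (auto simp: prod_eq_iff)
next
  case (Cons x t)
  let ?r = "peer_of M x"
  show ?case
  proof
    assume "run M S c (x # t) c'"
    then obtain c'' where st: "step M S c x c''" and r: "run M S c'' t c'" by auto
    from r Cons.IH have ih: "\<forall>p. local_path S p (fst c'' p) (peer_proj M p t) (fst c' p)"
      and ch: "chan_run M (snd c'') t = Some (snd c')" by auto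
    from st have tr: "(fst c ?r, x, fst c'' ?r) \<in> trans S ?r"
      and fs: "fst c'' = (fst c)(?r := fst c'' ?r)" and cs: "chan_step M (snd c) x = Some (snd c'')"
      by (auto simp: step_iff_local)
    have "local_path S p (fst c p) (peer_proj M p (x # t)) (fst c' p)" for p
    proof (cases "p = ?r")
      case True
      then show ?thesis using tr ih by auto
    next
      case False
      then have "fst c'' p = fst c p" using fs by (metis fun_upd_other)
      then show ?thesis using False ih by (metis peer_proj_simps(2))
    qed
    with cs ch show "(\<forall>p. local_path S p (fst c p) (peer_proj M p (x # t)) (fst c' p)) \<and>
        chan_run M (snd c) (x # t) = Some (snd c')" by simp
  next
    assume H: "(\<forall>p. local_path S p (fst c p) (peer_proj M p (x # t)) (fst c' p)) \<and>
        chan_run M (snd c) (x # t) = Some (snd c')"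
    then obtain ch'' where cs: "chan_step M (snd c) x = Some ch''"
      and ch: "chan_run M ch'' t = Some (snd c')"
      by (auto split: option.splits)
    from H have "local_path S ?r (fst c ?r) (x # peer_proj M ?r t) (fst c' ?r)"
      by (metis peer_proj_simps(2))
    then obtain q where tr: "(fst c ?r, x, q) \<in> trans S ?r"
      and lq: "local_path S ?r q (peer_proj M ?r t) (fst c' ?r)"
      by auto
    define c'' where "c'' = ((fst c)(?r := q), ch'')"
    have "step M S c x c''" using tr cs by (simp add: step_iff_local c''_def)
    moreover have "local_path S p (fst c'' p) (peer_proj M p t) (fst c' p)" for p
    proof (cases "p = ?r")
      case True
      then show ?thesis using lq by (simp add: c''_def)
    next
      case False
      then have "peer_proj M p (x # t) = peer_proj M p t" by simp
      with False H show ?thesis by (metis c''_def fst_conv fun_upd_other)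
    qed
    then have "run M S c'' t c'" using Cons.IH ch by (simp add: c''_def)
    ultimately show "run M S c (x # t) c'" by (metis run.simps(2))
  qed
qed

lemma run_append: "run M S c (t1 @ t2) c' \<longleftrightarrow> (\<exists>m. run M S c t1 m \<and> run M S m t2 c')"
  by (induction t1 arbitrary: c) auto

lemma run_take: "run M S c t c' \<Longrightarrow> \<exists>m. run M S c (take n t) m"
  by (metis append_take_drop_id run_append)

lemma conf0_simps [simp]: "fst (conf0 S) = init S" "snd (conf0 S) = (\<lambda>i j. [])"
  by (auto simp: conf0_def)

lemma run_of_local_paths:
  assumes "\<And>p. local_path S p (init S p) (peer_proj M p t) (st p)"
    and "chan_run M (\<lambda>i j. []) t = Some ch"
  shows "run M S (conf0 S) t (st, ch)"
  using assms by (simp add: run_iff_local)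

lemma pi_send_append [simp]: "pi_send (u @ w) = pi_send u @ pi_send w"
  by (induction u rule: pi_send.induct) auto

lemma length_pi_send_le: "length (pi_send t) \<le> length t"
  by (induction t rule: pi_send.induct) auto

lemma run_channel_contents:
  "run M S c t c' \<Longrightarrow> snd c i j @ sent_on M i j t = recv_on M i j t @ snd c' i j"
proof (induction t arbitrary: c)
  case Nil
  then show ?case by (simp add: sent_on_def recv_on_def)
next
  case (Cons x t)
  then obtain c'' where st: "step M S c x c''" and r: "run M S c'' t c'" by auto
  have ih: "snd c'' i j @ sent_on M i j t = recv_on M i j t @ snd c' i j" using Cons.IH r by blast
  show ?case
  proof (cases x)
    case (Send a)
    then have "snd c'' = (snd c)(src M a := (snd c (src M a))(dst M a := snd c (src M a) (dst M a) @ [a]))"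
      using st by (simp add: step_def Let_def)
    then show ?thesis using ih Send by (auto simp: sent_on_def recv_on_def split: if_splits)
  next
    case (Recv a)
    then have hd: "snd c (src M a) (dst M a) = a # snd c'' (src M a) (dst M a)"
      and upd: "snd c'' = (snd c)(src M a := (snd c (src M a))(dst M a := snd c'' (src M a) (dst M a)))"
      using st by (simp_all add: step_def Let_def)
    show ?thesis
    proof (cases "src M a = i \<and> dst M a = j")
      case True
      then show ?thesis using ih Recv hd by (auto simp: sent_on_def recv_on_def)
    next
      case False
      then have "snd c'' i j = snd c i j" using upd by (metis fun_upd_apply)
      then show ?thesis using ih Recv False by (auto simp: sent_on_def recv_on_def)
    qed
  qed
qed

lemma run_buf: "run M S (conf0 S) t c \<Longrightarrow> buf M i j t = Some (snd c i j)"
  using run_channel_contents[of M S "conf0 S" t c i j] by (simp add: buf_def)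

lemma run_in_T_if_channels_bounded:
  assumes "run M S (conf0 S) t c" and "0 < K"
    and "\<And>n m i j. n \<le> length t \<Longrightarrow> run M S (conf0 S) (take n t) m \<Longrightarrow> length (snd m i j) \<le> K"
  shows "t \<in> T M S K"
proof -
  have "is_k_fifo M K t"
    unfolding is_k_fifo_def
  proof (intro allI impI)
    fix i j n assume "n \<le> length t"
    moreover obtain m where "run M S (conf0 S) (take n t) m" using run_take assms(1) by blast
    ultimately show "\<exists>w. buf M i j (take n t) = Some w \<and> length w \<le> K"
      using run_buf assms(3) by blast
  qed
  moreover have "reachable_trace M S t" using assms(1) unfolding reachable_trace_def by blast
  ultimately show ?thesis using assms(2) by (simp add: T_def)
qed

lemma run_in_T_omega:
  assumes "run M S (conf0 S) t c"
  shows "t \<in> T_omega M S"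
proof -
  have "length (snd m i j) \<le> Suc (length t)"
    if "n \<le> length t" and run: "run M S (conf0 S) (take n t) m" for n m i j
  proof -
    have "length (snd m i j) \<le> length (sent_on M i j (take n t))"
      using run_channel_contents[OF run, of i j] by (metis conf0_simps(2) append_Nil length_append le_add2)
    also have "\<dots> \<le> length (pi_send (take n t))" by (simp add: sent_on_def)
    also have "\<dots> \<le> length t" using length_pi_send_le[of "take n t"] by simp
    finally show ?thesis by simp
  qed
  then have "t \<in> T M S (Suc (length t))" using run_in_T_if_channels_bounded[OF assms] by blast
  then show ?thesis by (auto simp: T_omega_def)
qed

fun chan_run_bounded :: "'m msgset \<Rightarrow> nat \<Rightarrow> 'm channels \<Rightarrow> 'm action list \<Rightarrow> bool" where
  "chan_run_bounded M K ch [] \<longleftrightarrow> (\<forall>i j. length (ch i j) \<le> K)"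
| "chan_run_bounded M K ch (x # t) \<longleftrightarrow> (\<forall>i j. length (ch i j) \<le> K) \<and>
     (case chan_step M ch x of None \<Rightarrow> False | Some ch' \<Rightarrow> chan_run_bounded M K ch' t)"

lemma chan_run_bounded_append:
  "chan_run_bounded M K ch t1 \<Longrightarrow> chan_run M ch t1 = Some ch1 \<Longrightarrow> chan_run_bounded M K ch1 t2 \<Longrightarrow>
   chan_run_bounded M K ch (t1 @ t2)"
  by (induction t1 arbitrary: ch) (auto split: option.splits)

lemma chan_run_bounded_take:
  "chan_run_bounded M K ch t \<Longrightarrow> n \<le> length t \<Longrightarrow>
   \<exists>ch'. chan_run M ch (take n t) = Some ch' \<and> (\<forall>i j. length (ch' i j) \<le> K)"
proof (induction t arbitrary: ch n)
  case Nil
  then show ?case by auto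
next
  case (Cons x t)
  show ?case
  proof (cases n)
    case 0
    then show ?thesis using Cons.prems by auto
  next
    case (Suc n')
    from Cons.prems obtain ch' where "chan_step M ch x = Some ch'" "chan_run_bounded M K ch' t"
      by (auto split: option.splits)
    then show ?thesis using Cons.IH[of ch' n'] Suc Cons.prems(2) by auto
  qed
qed

lemma run_in_T_if_chan_run_bounded:
  assumes "run M S (conf0 S) t c" and "chan_run_bounded M K (\<lambda>i j. []) t" and "0 < K"
  shows "t \<in> T M S K"
proof (rule run_in_T_if_channels_bounded[OF assms(1,3)])
  fix n m i j assume "n \<le> length t" and run: "run M S (conf0 S) (take n t) m"
  then obtain ch where "chan_run M (\<lambda>i j. []) (take n t) = Some ch" "\<forall>i j. length (ch i j) \<le> K"
    using chan_run_bounded_take[OF assms(2)] by blast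
  then show "length (snd m i j) \<le> K" using run by (simp add: run_iff_local)
qed

definition sync_word :: "'m list \<Rightarrow> 'm action list" where
  "sync_word as = concat (map (\<lambda>a. [Send a, Recv a]) as)"

lemma sync_word_simps [simp]:
  "sync_word [] = []"
  "sync_word (a # as) = Send a # Recv a # sync_word as"
  "sync_word (as @ bs) = sync_word as @ sync_word bs"
  by (auto simp: sync_word_def)

lemma pi_send_sync_word [simp]: "pi_send (sync_word as) = as"
  by (induction as) auto

lemma is_sync_sync_word: "is_sync (sync_word as)"
  by (auto simp: is_sync_def sync_word_def)

lemma is_sync_imp_sync_word: "is_sync t \<Longrightarrow> t = sync_word (pi_send t)"
  by (auto simp: is_sync_def sync_word_def[symmetric])

lemma synchronizable1_sync_run:
  assumes "synchronizable1 M S" and "t \<in> T M S 1"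
  shows "\<exists>c. run M S (conf0 S) (sync_word (pi_send t)) c"
proof -
  have "Inl (pi_send t) \<in> ST M S 0" using assms by (auto simp: ST_def synchronizable1_def)
  then obtain t' where "pi_send t' = pi_send t" "is_sync t'" "reachable_trace M S t'"
    by (auto simp: ST_def T_def)
  then show ?thesis using is_sync_imp_sync_word unfolding reachable_trace_def by metis
qed

lemma synchronizable1_sync_run_stable:
  assumes "synchronizable1 M S" and "t \<in> T M S 1" and "run M S (conf0 S) t c" and "stable c"
  shows "run M S (conf0 S) (sync_word (pi_send t)) c"
proof -
  have "Inr (pi_send t, c) \<in> ST M S 1" using assms(2-4) unfolding ST_def by blast
  then have "Inr (pi_send t, c) \<in> ST M S 0" using assms(1) by (simp add: synchronizable1_def)
  then obtain t' where "pi_send t' = pi_send t" "is_sync t'" "run M S (conf0 S) t' c"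
    by (auto simp: ST_def T_def)
  then show ?thesis using is_sync_imp_sync_word by metis
qed

lemma chan_run_sync_word:
  "\<forall>a\<in>set as. ch (src M a) (dst M a) = [] \<Longrightarrow> chan_run M ch (sync_word as) = Some ch"
proof (induction as)
  case Nil
  then show ?case by simp
next
  case (Cons a as)
  then have "ch (src M a) (dst M a) = []" by simp
  moreover from this have "ch(src M a := (ch (src M a))(dst M a := [])) = ch" by (auto simp: fun_eq_iff)
  ultimately show ?case using Cons by (simp add: chan_step_def)
qed

lemma chan_run_bounded_sync_word:
  "\<forall>a\<in>set as. ch (src M a) (dst M a) = [] \<Longrightarrow> \<forall>i j. length (ch i j) \<le> 1 \<Longrightarrow>
   chan_run_bounded M 1 ch (sync_word as)"
proof (induction as)
  case Nil
  then show ?case by simp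
next
  case (Cons a as)
  then have "ch (src M a) (dst M a) = []" by simp
  moreover from this have "ch(src M a := (ch (src M a))(dst M a := [])) = ch" by (auto simp: fun_eq_iff)
  moreover have "\<forall>i j. length ((ch(src M a := (ch (src M a))(dst M a := [a]))) i j) \<le> 1"
    using Cons.prems(2) by auto
  ultimately show ?case using Cons by (simp add: chan_step_def)
qed

lemma chan_run_sends:
  "chan_run M ch (map Send us) = Some (\<lambda>k l. ch k l @ filter (\<lambda>a. src M a = k \<and> dst M a = l) us)"
  by (induction us arbitrary: ch) (simp_all add: chan_step_def fun_eq_iff)

lemma peer_proj_sync_word_sends:
  "\<forall>a\<in>set w. src M a = p \<and> dst M a \<noteq> p \<Longrightarrow> peer_proj M p (sync_word w) = map Send w"
  by (induction w) auto

lemma chan_run_pending_send: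
  assumes "\<forall>a\<in>set w. src M a \<noteq> src M b"
  defines "B \<equiv> \<lambda>k l. if k = src M b \<and> l = dst M b then [b] else []"
  shows "chan_run M (\<lambda>k l. []) (sync_word s0 @ Send b # sync_word w) = Some B"
    and "chan_run_bounded M 1 (\<lambda>k l. []) (sync_word s0 @ Send b # sync_word w)"
proof -
  have empty: "chan_run M (\<lambda>k l. []) (sync_word s0) = Some (\<lambda>k l. [])"
    by (simp add: chan_run_sync_word)
  have send: "chan_step M (\<lambda>k l. []) (Send b) = Some B"
    by (auto simp: chan_step_def B_def fun_eq_iff)
  have "\<forall>a\<in>set w. B (src M a) (dst M a) = []" using assms(1) by (simp add: B_def)
  then have pending: "chan_run M B (sync_word w) = Some B" "chan_run_bounded M 1 B (sync_word w)"
    by (simp add: chan_run_sync_word) (rule chan_run_bounded_sync_word, use assms(1) in \<open>auto simp: B_def\<close>)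
  show "chan_run M (\<lambda>k l. []) (sync_word s0 @ Send b # sync_word w) = Some B"
    using empty send pending(1) by (simp add: chan_run_append)
  have "chan_run_bounded M 1 (\<lambda>k l. []) [Send b]" using send by (simp add: B_def)
  then have "chan_run_bounded M 1 (\<lambda>k l. []) (Send b # sync_word w)"
    using chan_run_bounded_append[of M 1 _ "[Send b]"] send pending by simp
  then show "chan_run_bounded M 1 (\<lambda>k l. []) (sync_word s0 @ Send b # sync_word w)"
    using chan_run_bounded_append[OF _ empty] chan_run_bounded_sync_word[of s0 "\<lambda>k l. []" M] by simp
qed

lemma pending_send_run_in_T1:
  assumes pending: "\<forall>a\<in>set w. src M a \<noteq> src M b"
    and paths: "\<And>p. local_path S p (init S p) (peer_proj M p (sync_word s0 @ Send b # sync_word w @ [x])) (st p)"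
    and last: "chan_step M (\<lambda>k l. if k = src M b \<and> l = dst M b then [b] else []) x = Some ch"
    and bounded: "\<forall>k l. length (ch k l) \<le> 1"
  shows "run M S (conf0 S) (sync_word s0 @ Send b # sync_word w @ [x]) (st, ch)"
    and "sync_word s0 @ Send b # sync_word w @ [x] \<in> T M S 1"
proof -
  let ?B = "\<lambda>k l. if k = src M b \<and> l = dst M b then [b] else []"
  have split: "sync_word s0 @ Send b # sync_word w @ [x] = (sync_word s0 @ Send b # sync_word w) @ [x]"
    by simp
  have "chan_run_bounded M 1 ?B [x]" using last bounded by simp
  then have "chan_run_bounded M 1 (\<lambda>k l. []) (sync_word s0 @ Send b # sync_word w @ [x])"
    unfolding split using chan_run_bounded_append[OF chan_run_pending_send(2,1)[OF pending]] by blast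
  moreover have "chan_run M (\<lambda>k l. []) (sync_word s0 @ Send b # sync_word w @ [x]) = Some ch"
    unfolding split using chan_run_pending_send(1)[OF pending] last
    by (simp only: chan_run_append) simp
  then show run: "run M S (conf0 S) (sync_word s0 @ Send b # sync_word w @ [x]) (st, ch)"
    by (rule run_of_local_paths[OF paths])
  ultimately show "sync_word s0 @ Send b # sync_word w @ [x] \<in> T M S 1"
    using run by (simp add: run_in_T_if_chan_run_bounded)
qed

lemma sync_run_after_pending_send:
  assumes ms: "is_msgset M" and sy: "synchronizable1 M S"
    and b: "b \<in> msgs M" "src M b = i" "dst M b = j"
    and w: "\<forall>a\<in>set w. a \<in> msgs M \<and> src M a = j"
    and s0: "\<forall>p. \<exists>q. local_path S p (init S p) (peer_proj M p (sync_word s0)) q"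
    and sender: "\<exists>q. local_path S i (init S i) (peer_proj M i (sync_word s0) @ [Send b]) q"
    and receiver: "\<exists>q. local_path S j (init S j) (peer_proj M j (sync_word s0) @ map Send w) q"
    and "p \<noteq> j"
  shows "\<exists>q. local_path S p (init S p) (peer_proj M p (sync_word (s0 @ b # w))) q"
  using receiver \<open>p \<noteq> j\<close> w
proof (induction w arbitrary: p rule: rev_induct)
  case Nil
  then show ?case using s0 sender by (cases "p = i") (auto simp: b)
next
  case (snoc a w)
  have ij: "i \<noteq> j" using ms b by (auto simp: is_msgset_def)
  have w_sends: "\<forall>a\<in>set (w @ [a]). src M a = j \<and> dst M a \<noteq> j"
    using ms snoc.prems(3) unfolding is_msgset_def by (metis in_set_conv_decomp)
  define tr where "tr = sync_word s0 @ Send b # sync_word w @ [Send a]"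
  have "\<exists>q. local_path S p (init S p) (peer_proj M p tr) q" for p
  proof (cases "p = j")
    case True
    then have "peer_proj M p tr = peer_proj M j (sync_word s0) @ map Send (w @ [a])"
      using ij b w_sends peer_proj_sync_word_sends[of w M j] by (simp add: tr_def)
    then show ?thesis using snoc.prems(1) True by simp
  next
    case False
    have "\<exists>q. local_path S j (init S j) (peer_proj M j (sync_word s0) @ map Send w) q"
      using snoc.prems(1) local_path_prefix by (metis append_assoc list.simps(9) map_append)
    then have "\<exists>q. local_path S p (init S p) (peer_proj M p (sync_word (s0 @ b # w))) q"
      using snoc.IH False snoc.prems(3) by simp
    moreover have "peer_proj M p tr = peer_proj M p (sync_word (s0 @ b # w))"
      using False b w_sends by (simp add: tr_def)
    ultimately show ?thesis by simp
  qed
  then obtain st where paths: "\<And>p. local_path S p (init S p) (peer_proj M p tr) (st p)" by metis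
  have not_ij: "\<forall>a\<in>set w. src M a \<noteq> src M b" using w_sends ij b by auto
  obtain ch where ch: "chan_step M (\<lambda>k l. if k = src M b \<and> l = dst M b then [b] else []) (Send a) = Some ch"
    by (simp add: chan_step_def)
  moreover have "\<forall>k l. length (ch k l) \<le> 1"
    using ch w_sends ij b by (auto simp: chan_step_def)
  ultimately have "tr \<in> T M S 1"
    using pending_send_run_in_T1(2)[OF not_ij paths[unfolded tr_def]] by (simp add: tr_def)
  then obtain c where "run M S (conf0 S) (sync_word (s0 @ b # w @ [a])) c"
    using synchronizable1_sync_run[OF sy] by (fastforce simp: tr_def)
  then show ?case unfolding run_iff_local conf0_simps by blast
qed

lemma receive_before_sends:
  assumes ms: "is_msgset M" and sy: "synchronizable1 M S"
    and b: "b \<in> msgs M" "src M b = i" "dst M b = j"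
    and w: "\<forall>a\<in>set w. a \<in> msgs M \<and> src M a = j"
    and s0: "\<forall>p. \<exists>q. local_path S p (init S p) (peer_proj M p (sync_word s0)) q"
    and sender: "\<exists>q. local_path S i (init S i) (peer_proj M i (sync_word s0) @ [Send b]) q"
    and receiver: "local_path S j (init S j) (peer_proj M j (sync_word s0) @ map Send w @ [Recv b]) q"
  shows "local_path S j (init S j) (peer_proj M j (sync_word s0) @ Recv b # map Send w) q"
proof -
  have ij: "i \<noteq> j" using ms b by (auto simp: is_msgset_def)
  have w_sends: "\<forall>a\<in>set w. src M a = j \<and> dst M a \<noteq> j"
    using ms w unfolding is_msgset_def by metis
  define tr where "tr = sync_word s0 @ Send b # sync_word w @ [Recv b]"
  have proj_j: "peer_proj M j tr = peer_proj M j (sync_word s0) @ map Send w @ [Recv b]"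
    using ij b w_sends peer_proj_sync_word_sends[of w M j] by (simp add: tr_def)
  have "\<exists>q. local_path S j (init S j) (peer_proj M j (sync_word s0) @ map Send w) q"
    using receiver local_path_prefix by (metis append_assoc)
  then have "\<exists>q'. local_path S p (init S p) (peer_proj M p tr) q' \<and> (p = j \<longrightarrow> q' = q)" for p
    using sync_run_after_pending_send[OF ms sy b w s0 sender, of p] receiver proj_j b
    by (cases "p = j") (auto simp: tr_def)
  then obtain st where paths: "\<And>p. local_path S p (init S p) (peer_proj M p tr) (st p)"
    and st_j: "st j = q" by metis
  have not_ij: "\<forall>a\<in>set w. src M a \<noteq> src M b" using w_sends ij b by auto
  have "chan_step M (\<lambda>k l. if k = src M b \<and> l = dst M b then [b] else []) (Recv b) = Some (\<lambda>k l. [])"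
    by (auto simp: chan_step_def fun_eq_iff)
  from pending_send_run_in_T1[OF not_ij paths[unfolded tr_def] this]
  have run: "run M S (conf0 S) tr (st, \<lambda>k l. [])" and "tr \<in> T M S 1" by (simp_all add: tr_def)
  then have "run M S (conf0 S) (sync_word (s0 @ b # w)) (st, \<lambda>k l. [])"
    using synchronizable1_sync_run_stable[OF sy _ run] by (simp add: stable_def tr_def)
  then have "\<forall>p. local_path S p (init S p) (peer_proj M p (sync_word (s0 @ b # w))) (st p)"
    unfolding run_iff_local conf0_simps fst_conv by (rule conjunct1)
  then have "local_path S j (init S j) (peer_proj M j (sync_word (s0 @ b # w))) q"
    using st_j by metis
  then show ?thesis
    using ij b w_sends peer_proj_sync_word_sends[of w M j] by simp
qed

lemma trans_msg_in_msgs: "is_system M S \<Longrightarrow> (q, x, q') \<in> trans S p \<Longrightarrow> msg_of x \<in> msgs M"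
  unfolding is_system_def by (metis empty_iff)

lemma run_msgs_in_msgs: "is_system M S \<Longrightarrow> run M S c t c' \<Longrightarrow> x \<in> set t \<Longrightarrow> msg_of x \<in> msgs M"
proof (induction t arbitrary: c)
  case Nil
  then show ?case by simp
next
  case (Cons y t)
  then obtain c'' where "step M S c y c''" and "run M S c'' t c'" by auto
  then show ?case using Cons trans_msg_in_msgs by (metis set_ConsD step_iff_local)
qed

lemma oriented_ring_dst: "oriented_ring M \<Longrightarrow> a \<in> msgs M \<Longrightarrow> dst M a = src M a mod npeers M + 1"
  unfolding oriented_ring_def topology_def by blast

text \<open>On a ring every peer sends on a single channel, so a channel holds all pending
  messages of its sender.\<close>
lemma oriented_ring_channel_filter:
  assumes "oriented_ring M" and "set us \<subseteq> msgs M" and "b \<in> msgs M"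
  shows "filter (\<lambda>a. src M a = src M b \<and> dst M a = dst M b) us = filter (\<lambda>a. src M a = src M b) us"
  using assms by (intro filter_cong) (auto simp: oriented_ring_dst)

lemma oriented_ring_first_pending:
  assumes "oriented_ring M" and "set us \<subseteq> msgs M" and "b \<in> msgs M"
    and "filter (\<lambda>a. src M a = src M b \<and> dst M a = dst M b) us = b # ys"
  obtains us1 us2 where "us = us1 @ b # us2" and "\<forall>u\<in>set us1. src M u \<noteq> src M b"
    and "ys = filter (\<lambda>a. src M a = src M b \<and> dst M a = dst M b) us2"
proof -
  have "filter (\<lambda>a. src M a = src M b) us = b # ys"
    using assms(4) oriented_ring_channel_filter[OF assms(1-3)] by simp
  then obtain us1 us2 where us: "us = us1 @ b # us2" and "\<forall>u\<in>set us1. src M u \<noteq> src M b"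
    and "ys = filter (\<lambda>a. src M a = src M b) us2"
    by (blast dest: filter_eq_ConsD)
  moreover have "set us2 \<subseteq> msgs M" using assms(2) us by auto
  ultimately show thesis using that oriented_ring_channel_filter[OF assms(1) _ assms(3)] by simp
qed

lemma chan_run_normalized:
  "chan_run M (\<lambda>k l. []) (sync_word s0 @ map Send us) =
   Some (\<lambda>k l. filter (\<lambda>a. src M a = k \<and> dst M a = l) us)"
  by (simp add: chan_run_append chan_run_sync_word chan_run_sends)

lemma normalized_run_receiver_swap:
  assumes ms: "is_msgset M" and sy: "synchronizable1 M S"
    and run: "run M S (conf0 S) (sync_word s0 @ map Send us) m"
    and b: "b \<in> msgs M" "src M b = i" "dst M b = j"
    and us: "set us \<subseteq> msgs M" and first: "filter (\<lambda>a. src M a = i) us = b # rest"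
    and recv: "(fst m j, Recv b, q) \<in> trans S j"
  shows "local_path S j (init S j)
           (peer_proj M j (sync_word s0) @ Recv b # map Send (filter (\<lambda>a. src M a = j) us)) q"
proof (rule receive_before_sends[OF ms sy b])
  let ?sends = "\<lambda>p. filter (\<lambda>a. src M a = p) us"
  have paths: "\<forall>p. local_path S p (init S p) (peer_proj M p (sync_word s0) @ map Send (?sends p)) (fst m p)"
    using run by (simp add: run_iff_local peer_proj_map_Send)
  show "\<forall>a\<in>set (?sends j). a \<in> msgs M \<and> src M a = j" using us by auto
  show "\<forall>p. \<exists>q. local_path S p (init S p) (peer_proj M p (sync_word s0)) q"
    using paths local_path_prefix by metis
  have "peer_proj M i (sync_word s0) @ map Send (?sends i) =
        (peer_proj M i (sync_word s0) @ [Send b]) @ map Send rest"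
    using first by simp
  then show "\<exists>q. local_path S i (init S i) (peer_proj M i (sync_word s0) @ [Send b]) q"
    using paths local_path_prefix by metis
  have "local_path S j (fst m j) [Recv b] q" using recv by simp
  then have "local_path S j (init S j) ((peer_proj M j (sync_word s0) @ map Send (?sends j)) @ [Recv b]) q"
    using paths by (intro local_path_append[THEN iffD2]) blast
  then show "local_path S j (init S j) (peer_proj M j (sync_word s0) @ map Send (?sends j) @ [Recv b]) q"
    by simp
qed

lemma channels_remove_pending:
  assumes "us = us1 @ b # us2" and "\<forall>u\<in>set us1. src M u \<noteq> src M b"
  defines "chans \<equiv> \<lambda>xs k l. filter (\<lambda>a. src M a = k \<and> dst M a = l) xs"
  shows "(chans us)(src M b := (chans us (src M b))(dst M b := chans us2 (src M b) (dst M b)))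
         = chans (us1 @ us2)"
  using assms by (auto simp: chans_def fun_eq_iff)

lemma normalized_run_receive:
  assumes ms: "is_msgset M" and ri: "oriented_ring M" and sys: "is_system M S"
    and sy: "synchronizable1 M S"
    and run: "run M S (conf0 S) (sync_word s0 @ map Send us) m"
    and step: "step M S m (Recv b) c"
  shows "\<exists>us'. run M S (conf0 S) (sync_word (s0 @ [b]) @ map Send us') c"
proof -
  define i where "i = src M b"
  define j where "j = dst M b"
  let ?sends = "\<lambda>p xs. filter (\<lambda>a. src M a = p) xs"
  have us_msgs: "set us \<subseteq> msgs M" using run_msgs_in_msgs[OF sys run] by fastforce
  have paths: "\<forall>p. local_path S p (init S p) (peer_proj M p (sync_word s0) @ map Send (?sends p us)) (fst m p)"
    using run by (simp add: run_iff_local peer_proj_map_Send)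
  have channels: "snd m = (\<lambda>k l. filter (\<lambda>a. src M a = k \<and> dst M a = l) us)"
    using run by (simp add: run_iff_local chan_run_normalized)
  from step have recv: "(fst m j, Recv b, fst c j) \<in> trans S j" and others: "fst c = (fst m)(j := fst c j)"
    and chan: "chan_step M (snd m) (Recv b) = Some (snd c)"
    by (auto simp: step_iff_local j_def)
  have unchanged: "p \<noteq> j \<Longrightarrow> fst c p = fst m p" for p using others by (metis fun_upd_other)
  have b: "b \<in> msgs M" using trans_msg_in_msgs[OF sys recv] by simp
  then have ij: "i \<noteq> j" using ms by (auto simp: is_msgset_def i_def j_def)
  obtain ys where head: "snd m i j = b # ys" and chan_c: "snd c = (snd m)(i := (snd m i)(j := ys))"
    using chan by (auto simp: chan_step_def i_def j_def split: list.splits if_splits)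
  obtain us1 us2 where us: "us = us1 @ b # us2" and us1: "\<forall>u\<in>set us1. src M u \<noteq> i"
    and ys: "ys = filter (\<lambda>a. src M a = i \<and> dst M a = j) us2"
    using oriented_ring_first_pending[OF ri us_msgs b] head channels unfolding i_def j_def by auto
  define us' where "us' = us1 @ us2"
  have sends_i: "?sends i us = b # ?sends i us2" and sends_i': "?sends i us' = ?sends i us2"
    using us us1 by (simp_all add: i_def us'_def)
  have sends_p: "p \<noteq> i \<Longrightarrow> ?sends p us' = ?sends p us" for p
    using us by (auto simp: us'_def i_def)
  have swapped: "local_path S j (init S j) (peer_proj M j (sync_word s0) @ Recv b # map Send (?sends j us)) (fst c j)"
    using normalized_run_receiver_swap[OF ms sy run b i_def[symmetric] j_def[symmetric] us_msgs sends_i recv] .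
  have new_paths: "local_path S p (init S p) (peer_proj M p (sync_word (s0 @ [b]) @ map Send us')) (fst c p)" for p
  proof -
    consider "p = j" | "p = i" | "p \<noteq> i" "p \<noteq> j" by blast
    then show ?thesis
    proof cases
      case 1
      then show ?thesis using swapped ij sends_p[of j] by (simp add: peer_proj_map_Send i_def j_def)
    next
      case 2
      then show ?thesis using paths[rule_format, of i] unchanged[of i] ij sends_i sends_i'
        by (simp add: peer_proj_map_Send i_def j_def)
    next
      case 3
      then show ?thesis using paths[rule_format, of p] unchanged[of p] sends_p[of p]
        by (simp add: peer_proj_map_Send i_def j_def)
    qed
  qed
  have "snd c = (\<lambda>k l. filter (\<lambda>a. src M a = k \<and> dst M a = l) us')"
    using chan_c channels ys channels_remove_pending[OF us] us1 by (simp add: us'_def i_def j_def)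
  then have "chan_run M (\<lambda>k l. []) (sync_word (s0 @ [b]) @ map Send us') = Some (snd c)"
    by (simp only: chan_run_normalized)
  then have "run M S (conf0 S) (sync_word (s0 @ [b]) @ map Send us') (fst c, snd c)"
    by (rule run_of_local_paths[OF new_paths])
  then show ?thesis by auto
qed

lemma reachable_normalized_run:
  assumes "is_msgset M" and "oriented_ring M" and "is_system M S" and "synchronizable1 M S"
  shows "run M S (conf0 S) t c \<Longrightarrow> \<exists>s0 us. run M S (conf0 S) (sync_word s0 @ map Send us) c"
proof (induction t arbitrary: c rule: rev_induct)
  case Nil
  then have "run M S (conf0 S) (sync_word [] @ map Send []) c" by simp
  then show ?case by blast
next
  case (snoc x t)
  then obtain m where "run M S (conf0 S) t m" and step: "step M S m x c"
    by (auto simp: run_append)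
  then obtain s0 us where run: "run M S (conf0 S) (sync_word s0 @ map Send us) m"
    using snoc.IH by blast
  show ?case
  proof (cases x)
    case (Send a)
    have "run M S m [x] c" unfolding run.simps using step by blast
    then have "run M S (conf0 S) ((sync_word s0 @ map Send us) @ [x]) c"
      using run run_append by blast
    then have "run M S (conf0 S) (sync_word s0 @ map Send (us @ [a])) c"
      using Send by simp
    then show ?thesis by blast
  next
    case (Recv b)
    then show ?thesis using normalized_run_receive[OF assms run] step by blast
  qed
qed

theorem lemma4p11:
  fixes M :: "'m msgset" and S :: "('m, 's) system"
  assumes "is_msgset M" and "oriented_ring M"
    and "is_system M S" and "synchronizable1 M S"
    and "t \<in> T_omega M S"
  shows "\<exists>tN. normalized M tN \<and> tN \<in> T_omega M S \<and> equiv_S M S t tN"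
proof -
  from assms(5) obtain c where "run M S (conf0 S) t c"
    by (auto simp: T_omega_def T_def reachable_trace_def)
  moreover obtain s0 us where run: "run M S (conf0 S) (sync_word s0 @ map Send us) c"
    using reachable_normalized_run[OF assms(1-4) calculation] by blast
  moreover have "set us \<subseteq> msgs M" using run_msgs_in_msgs[OF assms(3) run] by fastforce
  then have "normalized M (sync_word s0 @ map Send us)"
    unfolding normalized_def using is_sync_sync_word by blast
  ultimately show ?thesis
    using assms(5) run_in_T_omega unfolding equiv_S_def by blast
qed

end
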